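(* Let $S\subset\mathbb{N}\oplus\mathbb{Z}^n$ be an ample graded semigroup with restricted growth. Then: 1) the cone $\mathrm{Con}(S)$ is strictly convex, i.e. the Newton convex set $\Delta(S)$ is bounded; 2) for $k>0$ let $d(k)$ be the maximum of the distances from the points $(k,x)$ to the boundary of $\mathrm{Con}(S)$, over $x\in M_S(k)\setminus S_k$ (with $d(k)=0$ if this set is empty). Then $\lim_{k\to\infty} d(k)/k=0$.
   Context: For a subsemigroup $S\subset\mathbb{N}\oplus\mathbb{Z}^n$ and $k>0$, $S_k=\{x\in\mathbb{Z}^n:(k,x)\in S\}$. $S$ is graded if each $S_k$ ($k>0$) is finite and non-empty; ample if there is $m$ such that the differences $a-b$, $a,b\in S_m$, generate $\mathbb{Z}^n$; of restricted growth if there is a constant $C$ with $\#S_k\le Ck^n$ for all $k>0$. $\mathrm{Con}(S)\subset\mathbb{R}^{n+1}$ is the closed convex cone generated by $S\cup\{0\}$; $M_S=\mathrm{Con}(S)\cap(\mathbb{N}\oplus\mathbb{Z}^n)$ and $M_S(k)=\{x:(k,x)\in M_S\}$. The Newton convex set is $\Delta(S)=\{x\in\mathbb{R}^n:(1,x)\in\mathrm{Con}(S)\}$. *)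

theory Defs
  imports "HOL-Analysis.Analysis"
begin

text \<open>A subsemigroup S of N (+) Z^n is modelled as a set of pairs (k, x) with
  k :: nat and x :: int ^ 'n, where the finite type 'n indexes the coordinates
  (so n = CARD('n)).\<close>

definition is_semigroup :: "(nat \<times> (int ^ 'n)) set \<Rightarrow> bool" where
  "is_semigroup S \<longleftrightarrow> (\<forall>a\<in>S. \<forall>b\<in>S. a + b \<in> S)"

definition slice :: "(nat \<times> (int ^ 'n)) set \<Rightarrow> nat \<Rightarrow> (int ^ 'n) set" where
  "slice S k = {x. (k, x) \<in> S}"

definition graded :: "(nat \<times> (int ^ 'n)) set \<Rightarrow> bool" where
  "graded S \<longleftrightarrow> (\<forall>k>0. finite (slice S k) \<and> slice S k \<noteq> {})"

definition subgroup_generated :: "'a::ab_group_add set \<Rightarrow> 'a set" where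
  "subgroup_generated D = (\<lambda>G. 0 \<in> G \<and> (\<forall>x\<in>G. \<forall>y\<in>G. x - y \<in> G)) hull D"

definition ample :: "(nat \<times> (int ^ 'n)) set \<Rightarrow> bool" where
  "ample S \<longleftrightarrow> (\<exists>m. subgroup_generated {a - b | a b. a \<in> slice S m \<and> b \<in> slice S m} = UNIV)"

definition restricted_growth :: "(nat \<times> (int ^ 'n)) set \<Rightarrow> bool" where
  "restricted_growth S \<longleftrightarrow>
     (\<exists>C::real. \<forall>k>0. real (card (slice S k)) \<le> C * real k ^ CARD('n))"

definition emb :: "nat \<times> (int ^ 'n) \<Rightarrow> real \<times> (real ^ 'n)" where
  "emb p = (real (fst p), (\<chi> i. real_of_int (snd p $ i)))"

definition Con :: "(nat \<times> (int ^ 'n)) set \<Rightarrow> (real \<times> (real ^ 'n)) set" where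
  "Con S = (\<lambda>T. closed T \<and> convex T \<and> cone T) hull (insert 0 (emb ` S))"

definition M_S :: "(nat \<times> (int ^ 'n)) set \<Rightarrow> nat \<Rightarrow> (int ^ 'n) set" where
  "M_S S k = {x. emb (k, x) \<in> Con S}"

definition Newton_set :: "(nat \<times> (int ^ 'n)) set \<Rightarrow> (real ^ 'n) set" where
  "Newton_set S = {x. (1, x) \<in> Con S}"

definition dfun :: "(nat \<times> (int ^ 'n)) set \<Rightarrow> nat \<Rightarrow> real" where
  "dfun S k = (let A = M_S S k - slice S k in
     if A = {} then 0 else Sup ((\<lambda>x. infdist (emb (k, x)) (frontier (Con S))) ` A))"

end

theory Submission
  imports Defs
begin

(* Since S is ample, every integer point of R^(n+1) is a difference of two points of
   S \<union> {0}; hence one element w of S shifts all integer points of norm at most L into S.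
   A compact set of points lying uniformly inside Con(S) is covered by the cone over finitely
   many elements F of S. If an integer point y = (k,x) has distance at least e*k from the
   boundary of Con(S) and norm at most R*k, then for large k the point y - w is a nonnegative
   combination of F; rounding the coefficients down writes y - w as an element of S plus an
   integer point of norm at most the sum of the norms of F, so y lies in S.

   If Delta(S) were unbounded, it would contain any number N of points with mutual distances
   above 2e; around each of them level k of Con(S) contains a box of side comparable to e*k
   whose integer points all lie in S_k, and these boxes are disjoint, so #S_k grows at least
   like N (e k)^n, against restricted growth. Once Delta(S) is bounded, |u| <= R u_0 on Con(S),
   and the argument above shows that no point of M_S(k) - S_k has distance e*k from the
   boundary for large k, i.e. d(k) < e*k. *)

section \<open>Convex cones\<close>

lemma convex_cone_hull_finite_subset:
  assumes "x \<in> convex_cone hull E"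
  obtains F where "finite F" "F \<subseteq> E" "x \<in> convex_cone hull F"
proof -
  let ?U = "\<Union>{convex_cone hull F | F. finite F \<and> F \<subseteq> E}"
  have "convex_cone hull E \<subseteq> ?U"
  proof (rule hull_minimal)
    show "E \<subseteq> ?U"
    proof
      fix x assume "x \<in> E"
      then show "x \<in> ?U"
        by (intro UnionI[of "convex_cone hull {x}"]) (auto intro: hull_inc)
    qed
    show "convex_cone ?U"
    proof (intro convex_cone_iff[THEN iffD2] conjI ballI allI impI)
      show "0 \<in> ?U"
        using convex_cone_hull_contains_0[of "{}"] by blast
    next
      fix x y assume "x \<in> ?U" "y \<in> ?U"
      then obtain F G where F: "finite F" "F \<subseteq> E" "x \<in> convex_cone hull F"
        and G: "finite G" "G \<subseteq> E" "y \<in> convex_cone hull G"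
        by blast
      then have "x \<in> convex_cone hull (F \<union> G)" "y \<in> convex_cone hull (F \<union> G)"
        by (meson Un_upper1 Un_upper2 hull_mono subsetD)+
      then have "x + y \<in> convex_cone hull (F \<union> G)"
        by (rule convex_cone_hull_add)
      then show "x + y \<in> ?U"
        using F G by blast
    next
      fix x and c :: real assume "x \<in> ?U" "0 \<le> c"
      then show "c *\<^sub>R x \<in> ?U"
        using convex_cone_hull_mul by blast
    qed
  qed
  then show ?thesis
    using assms that by blast
qed

lemma convex_cone_hull_finite_explicit:
  assumes "finite F" "x \<in> convex_cone hull F"
  obtains c where "\<forall>p\<in>F. 0 \<le> c p" "x = (\<Sum>p\<in>F. c p *\<^sub>R p)"
proof (cases "x = 0")
  case True
  then show ?thesis
    using that[of "\<lambda>_. 0"] by simp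
next
  case False
  then obtain y t where "y \<in> convex hull F" "0 \<le> t" "x = t *\<^sub>R y"
    using assms(2) by (auto simp: convex_cone_hull_convex_hull)
  moreover obtain u where "\<forall>p\<in>F. 0 \<le> u p" "y = (\<Sum>p\<in>F. u p *\<^sub>R p)"
    using \<open>y \<in> convex hull F\<close> by (auto simp: convex_hull_finite[OF assms(1)])
  ultimately show ?thesis
    using that[of "\<lambda>p. t * u p"] by (simp add: scaleR_sum_right)
qed

lemma convex_cone_hull_finite_floor:
  fixes F :: "'a::real_normed_vector set"
  assumes "finite F" "y \<in> convex_cone hull F"
  obtains m :: "'a \<Rightarrow> nat" where "norm (y - (\<Sum>p\<in>F. real (m p) *\<^sub>R p)) \<le> (\<Sum>p\<in>F. norm p)"
proof -
  obtain c where c: "\<forall>p\<in>F. 0 \<le> c p" "y = (\<Sum>p\<in>F. c p *\<^sub>R p)"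
    using convex_cone_hull_finite_explicit[OF assms] by blast
  have "norm (y - (\<Sum>p\<in>F. real (nat \<lfloor>c p\<rfloor>) *\<^sub>R p)) = norm (\<Sum>p\<in>F. (c p - \<lfloor>c p\<rfloor>) *\<^sub>R p)"
    using c by (simp add: sum_subtractf scaleR_diff_left)
  also have "\<dots> \<le> (\<Sum>p\<in>F. norm ((c p - \<lfloor>c p\<rfloor>) *\<^sub>R p))"
    by (rule norm_sum)
  also have "\<dots> \<le> (\<Sum>p\<in>F. norm p)"
    by (intro sum_mono) (simp add: mult_left_le_one_le frac_lt_1 less_imp_le flip: frac_def)
  finally show ?thesis
    by (rule that)
qed

lemma interior_convex_cone_hull_finite_subset:
  fixes E :: "'a::euclidean_space set"
  assumes "z \<in> interior (convex_cone hull E)"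
  obtains F where "finite F" "F \<subseteq> E" "z \<in> interior (convex_cone hull F)"
proof -
  obtain e where "e > 0" and e: "ball z e \<subseteq> convex_cone hull E"
    using assms mem_interior by blast
  define d where "d = e / (2 * DIM('a))"
  have "d > 0"
    using \<open>e > 0\<close> by (simp add: d_def)
  define D :: 'a where "D = (\<Sum>i\<in>Basis. d *\<^sub>R i)"
  have D: "D \<bullet> i = d" if "i \<in> Basis" for i
    using that by (simp add: D_def flip: scaleR_sum_right)
  obtain V where "finite V" and V: "cbox (z - D) (z + D) = convex hull V"
    using cube_convex_hull[OF \<open>d > 0\<close>, of z] unfolding D_def by blast
  have "cbox (z - D) (z + D) \<subseteq> ball z e"
  proof
    fix q assume q: "q \<in> cbox (z - D) (z + D)"
    have "\<bar>(q - z) \<bullet> i\<bar> \<le> d" if "i \<in> Basis" for i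
    proof -
      have "(z - D) \<bullet> i \<le> q \<bullet> i" "q \<bullet> i \<le> (z + D) \<bullet> i"
        using q that by (auto simp: mem_box)
      then show ?thesis
        using D[OF that] by (simp add: inner_diff_left inner_add_left abs_le_iff)
    qed
    then have "norm (q - z) \<le> DIM('a) * d"
      using norm_le_l1[of "q - z"] sum_mono[of Basis "\<lambda>i. \<bar>(q - z) \<bullet> i\<bar>" "\<lambda>_. d"] by simp
    also have "\<dots> < e"
      using \<open>e > 0\<close> by (simp add: d_def)
    finally show "q \<in> ball z e"
      by (simp add: dist_norm norm_minus_commute)
  qed
  then have "V \<subseteq> convex_cone hull E"
    using V e hull_subset[of V convex] by blast
  then have "\<forall>v\<in>V. \<exists>F. finite F \<and> F \<subseteq> E \<and> v \<in> convex_cone hull F"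
    by (meson convex_cone_hull_finite_subset subsetD)
  then obtain FV where FV: "\<And>v. v \<in> V \<Longrightarrow> finite (FV v) \<and> FV v \<subseteq> E \<and> v \<in> convex_cone hull FV v"
    by metis
  define F where "F = (\<Union>v\<in>V. FV v)"
  have "V \<subseteq> convex_cone hull F"
    using FV hull_mono[of "FV v" F convex_cone for v] by (fastforce simp: F_def)
  then have "cbox (z - D) (z + D) \<subseteq> convex_cone hull F"
    unfolding V by (rule hull_minimal) (simp add: convex_convex_cone_hull)
  moreover have "z \<in> box (z - D) (z + D)"
    using D \<open>d > 0\<close> by (simp add: mem_box inner_diff_left inner_add_left)
  ultimately have "z \<in> interior (convex_cone hull F)"
    by (metis interior_cbox interior_mono subsetD)
  moreover have "finite F" "F \<subseteq> E"
    using FV \<open>finite V\<close> by (auto simp: F_def)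
  ultimately show ?thesis
    using that by blast
qed

lemma compact_subset_interior_convex_cone_hull:
  fixes E :: "'a::euclidean_space set"
  assumes "compact K" "K \<subseteq> interior (convex_cone hull E)"
  obtains F where "finite F" "F \<subseteq> E" "K \<subseteq> convex_cone hull F"
proof -
  have "\<forall>z\<in>K. \<exists>F. finite F \<and> F \<subseteq> E \<and> z \<in> interior (convex_cone hull F)"
    using assms(2) interior_convex_cone_hull_finite_subset by (metis subsetD)
  then obtain FK where FK: "\<And>z. z \<in> K \<Longrightarrow> finite (FK z) \<and> FK z \<subseteq> E \<and> z \<in> interior (convex_cone hull FK z)"
    by metis
  obtain C where "C \<subseteq> K" "finite C" and C: "K \<subseteq> (\<Union>z\<in>C. interior (convex_cone hull FK z))"
    by (rule compactE_image[OF assms(1), of K "\<lambda>z. interior (convex_cone hull FK z)"]) (use FK in blast)+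
  define F where "F = (\<Union>z\<in>C. FK z)"
  have "interior (convex_cone hull FK z) \<subseteq> convex_cone hull F" if "z \<in> C" for z
    using that interior_subset hull_mono[of "FK z" F] by (fastforce simp: F_def)
  then have "K \<subseteq> convex_cone hull F"
    using C by blast
  moreover have "finite F" "F \<subseteq> E"
    using FK \<open>C \<subseteq> K\<close> \<open>finite C\<close> by (auto simp: F_def)
  ultimately show ?thesis
    using that by blast
qed

lemma ball_subset_if_le_infdist_frontier:
  fixes z :: "'a::real_normed_vector"
  assumes "z \<in> T" "r \<le> infdist z (frontier T)"
  shows "ball z r \<subseteq> T"
proof (rule ccontr)
  assume "\<not> ball z r \<subseteq> T"
  then obtain q where q: "q \<in> ball z r" "q \<notin> T"
    by blast
  then have "z \<in> ball z r"
    by (simp add: le_less_trans[OF zero_le_dist])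
  with q assms(1) obtain p where "p \<in> ball z r" "p \<in> frontier T"
    using connected_Int_frontier[OF connected_ball, of z r T] by blast
  then show False
    using infdist_le[of p "frontier T" z] assms(2) by simp
qed

lemma closed_Collect_cball_subset:
  fixes C :: "'a::real_normed_vector set"
  assumes "closed C"
  shows "closed {z. cball z r \<subseteq> C}"
proof -
  have eq: "{z. cball z r \<subseteq> C} = (\<Inter>v\<in>cball 0 r. (\<lambda>z. z + v) -` C)"
  proof (intro set_eqI iffI)
    fix z assume "z \<in> (\<Inter>v\<in>cball 0 r. (\<lambda>z. z + v) -` C)"
    moreover have "q - z \<in> cball 0 r" if "q \<in> cball z r" for q
      using that by (simp add: dist_norm norm_minus_commute)
    ultimately have "z + (q - z) \<in> C" if "q \<in> cball z r" for q
      using that by blast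
    then show "z \<in> {z. cball z r \<subseteq> C}"
      by auto
  qed (auto simp: subset_iff dist_norm)
  show ?thesis
    unfolding eq by (intro closed_INT ballI continuous_closed_vimage[OF assms]) (intro continuous_intros)
qed

lemma cone_scaleR_ball_subset:
  fixes C :: "'a::real_normed_vector set"
  assumes "cone C" "ball z r \<subseteq> C" "c > 0"
  shows "ball (c *\<^sub>R z) (c * r) \<subseteq> C"
proof
  fix y assume "y \<in> ball (c *\<^sub>R z) (c * r)"
  have "z - (1 / c) *\<^sub>R y = (1 / c) *\<^sub>R (c *\<^sub>R z - y)"
    using assms(3) by (simp add: algebra_simps)
  then have "dist z ((1 / c) *\<^sub>R y) = (1 / c) * dist (c *\<^sub>R z) y"
    using assms(3) by (simp add: dist_norm)
  also have "\<dots> < r"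
    using \<open>y \<in> ball (c *\<^sub>R z) (c * r)\<close> assms(3) by (simp add: field_simps)
  finally have "dist z ((1 / c) *\<^sub>R y) < r" .
  then have "(1 / c) *\<^sub>R y \<in> C"
    using assms(2) by auto
  then have "c *\<^sub>R ((1 / c) *\<^sub>R y) \<in> C"
    using assms(1,3) unfolding cone_def by (meson less_imp_le)
  then show "y \<in> C"
    using assms(3) by simp
qed

lemma cone_cball_shrink_subset:
  fixes C :: "'a::real_normed_vector set"
  assumes "cone C" "ball y (e * k) \<subseteq> C" "norm w < e / 2 * k" "k > 0"
  shows "cball ((1 / k) *\<^sub>R (y - w)) (e / 2) \<subseteq> C"
proof
  fix q assume q: "q \<in> cball ((1 / k) *\<^sub>R (y - w)) (e / 2)"
  have "y - k *\<^sub>R q = k *\<^sub>R ((1 / k) *\<^sub>R (y - w) - q) + w"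
    using assms(4) by (simp add: algebra_simps)
  then have "dist y (k *\<^sub>R q) \<le> k * dist ((1 / k) *\<^sub>R (y - w)) q + norm w"
    using norm_triangle_ineq[of "k *\<^sub>R ((1 / k) *\<^sub>R (y - w) - q)" w] assms(4)
    by (simp add: dist_norm)
  also have "\<dots> \<le> e / 2 * k + norm w"
    using q assms(4) by (simp add: mult.commute)
  also have "\<dots> < e * k"
    using assms(3) field_sum_of_halves[of "e * k"] by simp
  finally have "k *\<^sub>R q \<in> C"
    using assms(2) by auto
  then have "(1 / k) *\<^sub>R (k *\<^sub>R q) \<in> C"
    using assms(1,4) unfolding cone_def by (metis less_eq_real_def zero_less_divide_1_iff)
  then show "q \<in> C"
    using assms(4) by simp
qed

lemma convex_midpoint_ball_subset:
  fixes C :: "'a::real_normed_vector set"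
  assumes "convex C" "a \<in> C" "ball z r \<subseteq> C"
  shows "ball ((1/2) *\<^sub>R (z + a)) (r / 2) \<subseteq> C"
proof
  fix q assume "q \<in> ball ((1/2) *\<^sub>R (z + a)) (r / 2)"
  then have "dist z (z + 2 *\<^sub>R (q - (1/2) *\<^sub>R (z + a))) < r"
    by (simp add: dist_norm norm_minus_commute)
  then have "z + 2 *\<^sub>R (q - (1/2) *\<^sub>R (z + a)) \<in> C"
    using assms(3) by auto
  then have "(1/2) *\<^sub>R (z + 2 *\<^sub>R (q - (1/2) *\<^sub>R (z + a))) + (1/2) *\<^sub>R a \<in> C"
    using assms(1,2) by (intro convexD) auto
  then show "q \<in> C"
    by (simp add: algebra_simps)
qed

lemma cone_norm_le_fst:
  fixes C :: "(real \<times> 'a::real_normed_vector) set"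
  assumes "convex C" "cone C" "e \<in> C" "fst e = 1"
    and fst_nonneg: "\<And>u. u \<in> C \<Longrightarrow> 0 \<le> fst u"
    and "bounded {x. (1, x) \<in> C}"
  obtains R where "\<And>u. u \<in> C \<Longrightarrow> norm u \<le> R * fst u"
proof -
  obtain B where B: "\<And>x. (1, x) \<in> C \<Longrightarrow> norm x \<le> B"
    using assms(6) unfolding bounded_iff by auto
  have "norm u \<le> (1 + \<bar>B\<bar>) * fst u" if u: "u \<in> C" for u
  proof (cases "fst u = 0")
    case False
    then have pos: "fst u > 0"
      using fst_nonneg[OF u] by simp
    have "(1 / fst u) *\<^sub>R u \<in> C"
      using assms(2) u pos unfolding cone_def by simp
    moreover have "(1 / fst u) *\<^sub>R u = (1, (1 / fst u) *\<^sub>R snd u)"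
      using pos by (simp add: prod_eq_iff)
    ultimately have "norm ((1 / fst u) *\<^sub>R snd u) \<le> B"
      by (intro B) simp
    then have "norm (snd u) \<le> \<bar>B\<bar> * fst u"
      using pos by (simp add: field_simps) (smt (verit) mult_right_mono)
    then show ?thesis
      using norm_Pair_le[of "fst u" "snd u"] pos by (simp add: algebra_simps)
  next
    case True
    \<comment> \<open>a nonzero direction at height 0 would make the slice at height 1 unbounded\<close>
    have "snd u = 0"
    proof (rule ccontr)
      assume "snd u \<noteq> 0"
      define s where "s = (\<bar>B\<bar> + norm (snd e) + 1) / norm (snd u)"
      have "s \<ge> 0"
        by (simp add: s_def)
      then have "(1/2) *\<^sub>R e + (1/2) *\<^sub>R (s *\<^sub>R u) \<in> C"
        using assms(1,2,3) u unfolding cone_def by (intro convexD) auto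
      then have "2 *\<^sub>R ((1/2) *\<^sub>R e + (1/2) *\<^sub>R (s *\<^sub>R u)) \<in> C"
        using assms(2) unfolding cone_def by simp
      moreover have "2 *\<^sub>R ((1/2) *\<^sub>R e + (1/2) *\<^sub>R (s *\<^sub>R u)) = (1, snd e + s *\<^sub>R snd u)"
        using assms(4) True by (simp add: prod_eq_iff algebra_simps)
      ultimately have "norm (snd e + s *\<^sub>R snd u) \<le> B"
        by (intro B) simp
      moreover have "norm (s *\<^sub>R snd u) = \<bar>B\<bar> + norm (snd e) + 1"
        using \<open>snd u \<noteq> 0\<close> by (simp add: s_def)
      ultimately show False
        using norm_triangle_ineq4[of "snd e + s *\<^sub>R snd u" "snd e"] by simp
    qed
    then show ?thesis
      using True by (simp add: prod_eq_iff)
  qed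
  then show ?thesis
    using that by blast
qed

lemma unbounded_separated_subset:
  fixes A :: "'a::real_normed_vector set"
  assumes "\<not> bounded A" "0 \<le> d"
  obtains Y where "finite Y" "Y \<subseteq> A" "card Y = N"
    "\<And>y y'. y \<in> Y \<Longrightarrow> y' \<in> Y \<Longrightarrow> y \<noteq> y' \<Longrightarrow> d < norm (y - y')"
proof -
  have "\<exists>Y. finite Y \<and> Y \<subseteq> A \<and> card Y = N \<and> (\<forall>y\<in>Y. \<forall>y'\<in>Y. y \<noteq> y' \<longrightarrow> d < norm (y - y'))"
  proof (induction N)
    case 0
    then show ?case
      by (intro exI[of _ "{}"]) auto
  next
    case (Suc N)
    then obtain Y where Y: "finite Y" "Y \<subseteq> A" "card Y = N"
      "\<forall>y\<in>Y. \<forall>y'\<in>Y. y \<noteq> y' \<longrightarrow> d < norm (y - y')"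
      by blast
    obtain a where a: "a \<in> A" "norm a > (\<Sum>y\<in>Y. norm y) + d"
      using assms(1) unfolding bounded_iff by (meson not_le)
    have far: "d < norm (a - y)" if "y \<in> Y" for y
      using member_le_sum[OF that _ Y(1), of norm] norm_triangle_ineq2[of a y] a(2) by simp
    then have "a \<notin> Y"
      using assms(2) by force
    moreover have "d < norm (y - y')" if "y \<in> insert a Y" "y' \<in> insert a Y" "y \<noteq> y'" for y y'
      using that Y(4) far norm_minus_commute[of a] by (metis insert_iff)
    ultimately show ?case
      using Y a by (intro exI[of _ "insert a Y"]) auto
  qed
  then show ?thesis
    using that by blast
qed

section \<open>Differences of an additive monoid\<close>

definition set_differences :: "'a::ab_group_add set \<Rightarrow> 'a set" where
  "set_differences P = {a - b | a b. a \<in> P \<and> b \<in> P}"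

lemma mem_set_differences: "a \<in> P \<Longrightarrow> 0 \<in> P \<Longrightarrow> a \<in> set_differences P"
  unfolding set_differences_def by (metis (mono_tags, lifting) CollectI diff_zero)

lemma set_differences_add:
  assumes "\<And>a b. a \<in> P \<Longrightarrow> b \<in> P \<Longrightarrow> a + b \<in> P"
    and "x \<in> set_differences P" "y \<in> set_differences P"
  shows "x + y \<in> set_differences P"
proof -
  obtain a b c d where "x = a - b" "y = c - d" "a \<in> P" "b \<in> P" "c \<in> P" "d \<in> P"
    using assms(2,3) unfolding set_differences_def by blast
  then have "x + y = (a + c) - (b + d)" "a + c \<in> P" "b + d \<in> P"
    using assms(1) by (auto simp: algebra_simps)
  then show ?thesis
    unfolding set_differences_def by blast
qed

lemma set_differences_diff:
  assumes "\<And>a b. a \<in> P \<Longrightarrow> b \<in> P \<Longrightarrow> a + b \<in> P"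
    and "x \<in> set_differences P" "y \<in> set_differences P"
  shows "x - y \<in> set_differences P"
proof -
  obtain a b c d where "x = a - b" "y = c - d" "a \<in> P" "b \<in> P" "c \<in> P" "d \<in> P"
    using assms(2,3) unfolding set_differences_def by blast
  then have "x - y = (a + d) - (b + c)" "a + d \<in> P" "b + c \<in> P"
    using assms(1) by (auto simp: algebra_simps)
  then show ?thesis
    unfolding set_differences_def by blast
qed

lemma set_differences_common_shift:
  assumes "0 \<in> P" "\<And>a b. a \<in> P \<Longrightarrow> b \<in> P \<Longrightarrow> a + b \<in> P"
    and "finite D" "D \<subseteq> set_differences P"
  obtains w where "w \<in> P" "\<And>d. d \<in> D \<Longrightarrow> d + w \<in> P"
proof -
  have "\<exists>w\<in>P. \<forall>d\<in>D. d + w \<in> P"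
    using assms(3,4)
  proof (induction D rule: finite_induct)
    case empty
    then show ?case
      using assms(1) by blast
  next
    case (insert f D)
    then obtain w where w: "w \<in> P" "\<forall>d\<in>D. d + w \<in> P"
      by auto
    obtain a b where ab: "f = a - b" "a \<in> P" "b \<in> P"
      using insert(4) unfolding set_differences_def by blast
    have "f + (w + b) = a + w"
      using ab by (simp add: algebra_simps)
    then have "f + (w + b) \<in> P"
      using ab w assms(2) by simp
    moreover have "d + (w + b) \<in> P" if "d \<in> D" for d
      using w ab assms(2)[of "d + w" b] that by (simp add: add.assoc)
    ultimately show ?case
      using w ab assms(2) by (intro bexI[of _ "w + b"]) auto
  qed
  then show ?thesis
    using that by blast
qed

lemma of_nat_scaleR_mem_additive:
  fixes P :: "'a::real_vector set"
  assumes "0 \<in> P" "\<And>a b. a \<in> P \<Longrightarrow> b \<in> P \<Longrightarrow> a + b \<in> P" "x \<in> P"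
  shows "real n *\<^sub>R x \<in> P"
  by (induction n) (use assms in \<open>simp_all add: scaleR_add_left add.commute\<close>)

lemma sum_of_nat_scaleR_mem_additive:
  fixes P :: "'a::real_vector set"
  assumes "0 \<in> P" "\<And>a b. a \<in> P \<Longrightarrow> b \<in> P \<Longrightarrow> a + b \<in> P" "finite F" "F \<subseteq> P"
  shows "(\<Sum>p\<in>F. real (m p) *\<^sub>R p) \<in> P"
  using assms(3,4)
proof (induction F rule: finite_induct)
  case (insert p F)
  then show ?case
    using assms(2) of_nat_scaleR_mem_additive[OF assms(1,2)] by simp
qed (simp add: assms(1))

lemma of_int_scaleR_mem_subgroup:
  fixes G :: "'a::real_vector set"
  assumes "0 \<in> G" "\<And>a b. a \<in> G \<Longrightarrow> b \<in> G \<Longrightarrow> a - b \<in> G" "x \<in> G"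
  shows "real_of_int j *\<^sub>R x \<in> G"
proof -
  have add: "a + b \<in> G" if "a \<in> G" "b \<in> G" for a b
    using assms(1,2) that by (metis diff_0 diff_minus_eq_add)
  have n: "real (nat \<bar>j\<bar>) *\<^sub>R x \<in> G"
    by (rule of_nat_scaleR_mem_additive[OF assms(1) add assms(3)])
  show ?thesis
  proof (cases "j \<ge> 0")
    case True
    then show ?thesis
      using n by simp
  next
    case False
    then have "real_of_int j *\<^sub>R x = 0 - real (nat \<bar>j\<bar>) *\<^sub>R x"
      by (simp add: scaleR_left.minus)
    then show ?thesis
      using assms(2)[OF assms(1) n] by simp
  qed
qed

section \<open>Integer points\<close>

lemma vec_box_eq_image_PiE: "{x::'a^'n. \<forall>i. x $ i \<in> I i} = vec_lambda ` PiE UNIV I"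
proof (intro subset_antisym subsetI)
  fix x :: "'a^'n" assume "x \<in> {x. \<forall>i. x $ i \<in> I i}"
  then show "x \<in> vec_lambda ` PiE UNIV I"
    by (intro image_eqI[of _ _ "vec_nth x"]) auto
qed auto

definition int_box :: "real ^'n \<Rightarrow> real \<Rightarrow> (int ^'n) set" where
  "int_box c h = {x. \<forall>i. \<bar>real_of_int (x $ i) - c $ i\<bar> \<le> h}"

lemma int_box_eq_image_PiE:
  "int_box c h = vec_lambda ` PiE UNIV (\<lambda>i. {\<lceil>c $ i - h\<rceil>..\<lfloor>c $ i + h\<rfloor>})"
  unfolding vec_box_eq_image_PiE[symmetric]
  by (auto simp: int_box_def abs_le_iff ceiling_le_iff le_floor_iff algebra_simps)

lemma finite_int_box: "finite (int_box c h)"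
  unfolding int_box_eq_image_PiE by (intro finite_imageI finite_PiE) auto

lemma card_int_box_ge:
  assumes "1 \<le> h"
  shows "h ^ CARD('n) \<le> real (card (int_box (c :: real ^'n) h))"
proof -
  have "h \<le> real (card {\<lceil>a - h\<rceil>..\<lfloor>a + h\<rfloor>})" for a
  proof -
    have "h \<le> real_of_int (\<lfloor>a + h\<rfloor> - \<lceil>a - h\<rceil> + 1)"
      using assms by linarith
    then show ?thesis
      by simp
  qed
  then have "(\<Prod>i\<in>(UNIV::'n set). h) \<le> (\<Prod>i\<in>UNIV. real (card {\<lceil>c $ i - h\<rceil>..\<lfloor>c $ i + h\<rfloor>}))"
    using assms by (intro prod_mono) auto
  moreover have "inj_on vec_lambda (PiE UNIV (\<lambda>i. {\<lceil>c $ i - h\<rceil>..\<lfloor>c $ i + h\<rfloor>}))"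
    by (auto simp: inj_on_def vec_lambda_inject)
  ultimately show ?thesis
    by (simp add: int_box_eq_image_PiE card_image card_PiE)
qed

definition of_int_vec :: "int ^'n \<Rightarrow> real ^'n" where
  "of_int_vec x = (\<chi> i. real_of_int (x $ i))"

lemma norm_of_int_vec_diff_le:
  fixes c :: "real ^'n" and h :: real
  assumes "x \<in> int_box c h"
  shows "norm (of_int_vec x - c) \<le> real CARD('n) * h"
proof -
  have "norm (of_int_vec x - c) \<le> (\<Sum>i\<in>UNIV. \<bar>(of_int_vec x - c) $ i\<bar>)"
    by (rule norm_le_l1_cart)
  also have "\<dots> \<le> (\<Sum>i\<in>(UNIV::'n set). h)"
    using assms by (intro sum_mono) (simp add: int_box_def of_int_vec_def)
  finally show ?thesis
    by simp
qed

lemma int_box_disjoint: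
  fixes c c' :: "real ^'n" and h :: real
  assumes "2 * real CARD('n) * h < norm (c - c')"
  shows "int_box c h \<inter> int_box c' h = {}"
proof -
  have "norm (c - c') \<le> 2 * real CARD('n) * h" if "x \<in> int_box c h" "x \<in> int_box c' h" for x
    using norm_of_int_vec_diff_le[OF that(1)] norm_of_int_vec_diff_le[OF that(2)]
      norm_triangle_ineq4[of "of_int_vec x - c'" "of_int_vec x - c"]
    by simp
  then show ?thesis
    using assms by fastforce
qed

definition lattice_point :: "int \<times> (int ^'n) \<Rightarrow> real \<times> (real ^'n)" where
  "lattice_point p = (real_of_int (fst p), of_int_vec (snd p))"

definition lattice :: "(real \<times> (real ^'n)) set" where
  "lattice = range lattice_point"

lemma lattice_diff:
  assumes "a \<in> lattice" "b \<in> lattice"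
  shows "a - b \<in> lattice"
proof -
  obtain p q where "a = lattice_point p" "b = lattice_point q"
    using assms unfolding lattice_def by auto
  then have "a - b = lattice_point (p - q)"
    by (simp add: lattice_point_def of_int_vec_def vec_eq_iff)
  then show ?thesis
    unfolding lattice_def by blast
qed

lemma finite_lattice_cball: "finite (lattice \<inter> cball 0 L)"
proof -
  have "lattice \<inter> cball 0 L \<subseteq> lattice_point ` ({-\<lceil>L\<rceil>..\<lceil>L\<rceil>} \<times> int_box 0 L)"
  proof
    fix z assume "z \<in> lattice \<inter> cball 0 L"
    then obtain j x where z: "z = lattice_point (j, x)" and "norm z \<le> L"
      unfolding lattice_def by auto
    then have "\<bar>real_of_int j\<bar> \<le> L"
      using norm_fst_le[of "fst z" "snd z"] by (simp add: lattice_point_def)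
    then have "j \<in> {-\<lceil>L\<rceil>..\<lceil>L\<rceil>}"
      by (simp add: abs_le_iff le_ceiling_iff ceiling_le_iff) linarith
    moreover have "\<bar>real_of_int (x $ i)\<bar> \<le> L" for i
      using component_le_norm_cart[of "snd z" i] norm_snd_le[of "snd z" "fst z"] \<open>norm z \<le> L\<close>
      by (simp add: z lattice_point_def of_int_vec_def)
    ultimately show "z \<in> lattice_point ` ({-\<lceil>L\<rceil>..\<lceil>L\<rceil>} \<times> int_box 0 L)"
      using z by (auto simp: int_box_def)
  qed
  then show ?thesis
    by (rule finite_subset) (simp add: finite_int_box)
qed

section \<open>The cone of a graded semigroup\<close>

lemma emb_Pair: "emb (k, x) = (real k, of_int_vec x)"
  by (simp add: emb_def of_int_vec_def)

lemma emb_add: "emb (a + b) = emb a + emb b"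
  by (simp add: emb_def vec_eq_iff)

lemma inj_emb: "inj emb"
  by (auto simp: inj_on_def emb_def vec_eq_iff prod_eq_iff)

definition emb_points :: "(nat \<times> (int ^'n)) set \<Rightarrow> (real \<times> (real ^'n)) set" where
  "emb_points S = insert 0 (emb ` S)"

lemma zero_mem_emb_points: "0 \<in> emb_points S"
  by (simp add: emb_points_def)

lemma emb_points_add:
  assumes "is_semigroup S" "a \<in> emb_points S" "b \<in> emb_points S"
  shows "a + b \<in> emb_points S"
proof (cases "a = 0 \<or> b = 0")
  case False
  then obtain p q where "p \<in> S" "q \<in> S" "a = emb p" "b = emb q"
    using assms(2,3) unfolding emb_points_def by auto
  then have "a + b = emb (p + q)" "p + q \<in> S"
    using assms(1) unfolding is_semigroup_def by (auto simp: emb_add)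
  then show ?thesis
    unfolding emb_points_def by blast
qed (use assms in auto)

lemma emb_in_lattice: "emb p \<in> lattice"
proof -
  have "emb p = lattice_point (int (fst p), snd p)"
    by (simp add: emb_def lattice_point_def of_int_vec_def)
  then show ?thesis
    unfolding lattice_def by blast
qed

lemma emb_points_subset_lattice: "emb_points S \<subseteq> lattice"
proof -
  have "0 = lattice_point (0 :: int \<times> (int ^'n))"
    by (simp add: lattice_point_def of_int_vec_def vec_eq_iff prod_eq_iff)
  then show ?thesis
    unfolding emb_points_def lattice_def using emb_in_lattice by (auto simp: lattice_def)
qed

lemma horizontal_lattice_point_mem_set_differences:
  fixes S :: "(nat \<times> (int ^'n)) set"
  assumes sg: "is_semigroup S" and "ample S"
  shows "(0, of_int_vec d) \<in> set_differences (emb_points S)"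
proof -
  let ?D = "set_differences (emb_points S)"
  let ?G = "{d. (0, of_int_vec d) \<in> ?D}"
  obtain m where m: "subgroup_generated {a - b | a b. a \<in> slice S m \<and> b \<in> slice S m} = UNIV"
    using assms(2) unfolding ample_def by blast
  have "subgroup_generated {a - b | a b. a \<in> slice S m \<and> b \<in> slice S m} \<subseteq> ?G"
    unfolding subgroup_generated_def
  proof (rule hull_minimal)
    show "{a - b | a b. a \<in> slice S m \<and> b \<in> slice S m} \<subseteq> ?G"
    proof clarify
      fix a b assume "a \<in> slice S m" "b \<in> slice S m"
      then have "emb (m, a) \<in> emb_points S" "emb (m, b) \<in> emb_points S"
        by (auto simp: emb_points_def slice_def)
      moreover have "(0, of_int_vec (a - b)) = emb (m, a) - emb (m, b)"
        by (simp add: emb_Pair of_int_vec_def vec_eq_iff)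
      ultimately show "(0, of_int_vec (a - b)) \<in> ?D"
        unfolding set_differences_def by blast
    qed
    have eq: "(0, of_int_vec (a - b)) = (0, of_int_vec a) - (0::real, of_int_vec b)" for a b
      by (simp add: of_int_vec_def vec_eq_iff)
    show "0 \<in> ?G \<and> (\<forall>a\<in>?G. \<forall>b\<in>?G. a - b \<in> ?G)"
    proof (intro conjI ballI)
      show "0 \<in> ?G"
        using mem_set_differences[OF zero_mem_emb_points zero_mem_emb_points]
        by (simp add: of_int_vec_def zero_prod_def zero_vec_def)
      fix a b assume "a \<in> ?G" "b \<in> ?G"
      then show "a - b \<in> ?G"
        using set_differences_diff[OF emb_points_add[OF sg], of "(0, of_int_vec a)" "(0, of_int_vec b)"]
        by (simp add: eq)
    qed
  qed
  then show ?thesis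
    using m by blast
qed

lemma lattice_subset_set_differences:
  fixes S :: "(nat \<times> (int ^'n)) set"
  assumes sg: "is_semigroup S" and "graded S" "ample S"
  shows "lattice \<subseteq> set_differences (emb_points S)"
proof
  let ?D = "set_differences (emb_points S)"
  obtain c where "c \<in> slice S 1"
    using assms(2) unfolding graded_def by auto
  then have "emb (1, c) \<in> ?D"
    by (intro mem_set_differences zero_mem_emb_points) (auto simp: emb_points_def slice_def)
  moreover have "0 \<in> ?D"
    by (rule mem_set_differences[OF zero_mem_emb_points zero_mem_emb_points])
  moreover have "a - b \<in> ?D" if "a \<in> ?D" "b \<in> ?D" for a b
    using set_differences_diff[OF emb_points_add[OF sg] that] .
  ultimately have "real_of_int j *\<^sub>R emb (1, c) \<in> ?D" for j
    using of_int_scaleR_mem_subgroup by blast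
  fix z :: "real \<times> (real ^'n)" assume "z \<in> lattice"
  then obtain j x where "z = lattice_point (j, x)"
    unfolding lattice_def by auto
  then have "z = real_of_int j *\<^sub>R emb (1, c) + (0, of_int_vec (\<chi> i. x $ i - j * c $ i))"
    by (simp add: lattice_point_def emb_Pair of_int_vec_def vec_eq_iff algebra_simps)
  then show "z \<in> ?D"
    using set_differences_add[OF emb_points_add[OF sg]] \<open>real_of_int j *\<^sub>R emb (1, c) \<in> ?D\<close>
      horizontal_lattice_point_mem_set_differences[OF sg assms(3)]
    by simp
qed

lemma Con_closed_convex_cone: "closed (Con S) \<and> convex (Con S) \<and> cone (Con S)"
  unfolding Con_def by (rule hull_in) (auto intro!: closed_Inter convex_Inter cone_Inter)

lemmas closed_Con = Con_closed_convex_cone[THEN conjunct1]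
  and convex_Con = Con_closed_convex_cone[THEN conjunct2, THEN conjunct1]
  and cone_Con = Con_closed_convex_cone[THEN conjunct2, THEN conjunct2]

lemma emb_points_subset_Con: "emb_points S \<subseteq> Con S"
  unfolding Con_def emb_points_def by (rule hull_subset)

lemma Con_fst_nonneg:
  fixes S :: "(nat \<times> (int ^'n)) set"
  assumes "z \<in> Con S"
  shows "0 \<le> fst z"
proof -
  have "closed {z :: real \<times> (real ^'n). 0 \<le> fst z}"
    by (intro closed_Collect_le continuous_intros)
  moreover have "convex {z :: real \<times> (real ^'n). 0 \<le> fst z}" "cone {z :: real \<times> (real ^'n). 0 \<le> fst z}"
    by (auto simp: cone_def convex_def)
  ultimately have "Con S \<subseteq> {z. 0 \<le> fst z}"
    unfolding Con_def by (intro hull_minimal) (auto simp: emb_def)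
  then show ?thesis
    using assms by blast
qed

lemma interior_Con_subset: "interior (Con S) \<subseteq> interior (convex_cone hull (emb ` S))"
proof -
  have "Con S \<subseteq> closure (convex_cone hull (emb ` S))"
    unfolding Con_def
  proof (rule hull_minimal)
    show "insert 0 (emb ` S) \<subseteq> closure (convex_cone hull (emb ` S))"
      using convex_cone_hull_contains_0 hull_subset closure_subset by fastforce
    show "closed (closure (convex_cone hull (emb ` S))) \<and> convex (closure (convex_cone hull (emb ` S)))
        \<and> cone (closure (convex_cone hull (emb ` S)))"
    proof -
      have "cone (convex_cone hull (emb ` S))"
        using conic_convex_cone_hull unfolding conic_def cone_def by blast
      then show ?thesis
        by (simp add: cone_closure convex_closure convex_convex_cone_hull)
    qed
  qed
  then show ?thesis
    using interior_mono convex_interior_closure[OF convex_convex_cone_hull] by metis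
qed

lemma interior_Con_nonempty:
  fixes S :: "(nat \<times> (int ^'n)) set"
  assumes "is_semigroup S" "graded S" "ample S"
  shows "interior (Con S) \<noteq> {}"
proof
  assume "interior (Con S) = {}"
  then obtain a b where "a \<noteq> 0" and hyperplane: "Con S \<subseteq> {x. a \<bullet> x = b}"
    using empty_interior_subset_hyperplane[OF convex_Con] by blast
  have "b = 0"
    using hyperplane emb_points_subset_Con by (force simp: emb_points_def)
  have orth: "a \<bullet> lattice_point p = 0" for p
  proof -
    obtain u v where "lattice_point p = u - v" "u \<in> emb_points S" "v \<in> emb_points S"
      using lattice_subset_set_differences[OF assms] unfolding set_differences_def lattice_def by blast
    moreover have "a \<bullet> u = 0" "a \<bullet> v = 0"
      using calculation(2,3) hyperplane emb_points_subset_Con \<open>b = 0\<close> by blast+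
    ultimately show ?thesis
      by (simp add: inner_diff_right)
  qed
  obtain a1 a2 where a: "a = (a1, a2)"
    by fastforce
  have "lattice_point (1, 0 :: int ^'n) = (1, 0)"
    by (simp add: lattice_point_def of_int_vec_def vec_eq_iff)
  then have "a1 = 0"
    using orth[of "(1, 0)"] by (simp add: a)
  moreover have "a2 $ i = 0" for i
  proof -
    have "of_int_vec (axis i 1) = axis i (1::real)"
      by (simp add: of_int_vec_def vec_eq_iff axis_def)
    then show ?thesis
      using orth[of "(0, axis i 1)"] by (simp add: a lattice_point_def inner_axis)
  qed
  ultimately show False
    using \<open>a \<noteq> 0\<close> by (simp add: a vec_eq_iff zero_prod_def)
qed

lemma Con_ball_at_level_one:
  fixes S :: "(nat \<times> (int ^'n)) set"
  assumes "is_semigroup S" "graded S" "ample S"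
  obtains c r where "r > 0" "ball (1, c) r \<subseteq> Con S"
proof -
  obtain z r where "r > 0" and ball: "ball z r \<subseteq> Con S"
    using interior_Con_nonempty[OF assms] mem_interior by blast
  have "z - (r / 2) *\<^sub>R (1, 0) \<in> ball z r"
    using \<open>r > 0\<close> by (simp add: dist_norm)
  then have "0 \<le> fst z - r / 2"
    using ball Con_fst_nonneg by fastforce
  then have "fst z > 0"
    using \<open>r > 0\<close> by simp
  then have "ball ((1 / fst z) *\<^sub>R z) ((1 / fst z) * r) \<subseteq> Con S"
    by (intro cone_scaleR_ball_subset[OF cone_Con ball]) simp
  moreover have "(1 / fst z) *\<^sub>R z = (1, (1 / fst z) *\<^sub>R snd z)"
    using \<open>fst z > 0\<close> by (simp add: prod_eq_iff)
  moreover have "(1 / fst z) * r > 0"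
    using \<open>r > 0\<close> \<open>fst z > 0\<close> by simp
  ultimately show ?thesis
    using that by (metis (no_types))
qed

lemma finite_cone_covers_deep_part_of_Con:
  fixes S :: "(nat \<times> (int ^'n)) set"
  assumes "e > 0"
  obtains F where "finite F" "F \<subseteq> emb ` S"
    "\<And>v. cball v e \<subseteq> Con S \<Longrightarrow> norm v \<le> R \<Longrightarrow> v \<in> convex_cone hull F"
proof -
  define K where "K = {z. cball z e \<subseteq> Con S} \<inter> cball 0 R"
  have "compact K"
    unfolding K_def compact_eq_bounded_closed
    by (intro conjI closed_Int closed_Collect_cball_subset closed_Con closed_cball bounded_Int) auto
  moreover have "K \<subseteq> interior (convex_cone hull (emb ` S))"
  proof
    fix z assume "z \<in> K"
    then have "ball z e \<subseteq> Con S"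
      unfolding K_def using ball_subset_cball by blast
    then have "z \<in> interior (Con S)"
      using assms mem_interior by blast
    then show "z \<in> interior (convex_cone hull (emb ` S))"
      using interior_Con_subset by blast
  qed
  ultimately obtain F where "finite F" "F \<subseteq> emb ` S" "K \<subseteq> convex_cone hull F"
    using compact_subset_interior_convex_cone_hull by blast
  moreover have "v \<in> K" if "cball v e \<subseteq> Con S" "norm v \<le> R" for v
    using that by (simp add: K_def)
  ultimately show ?thesis
    using that by blast
qed

lemma lattice_point_mem_emb_points:
  fixes S :: "(nat \<times> (int ^'n)) set"
  assumes sg: "is_semigroup S" and F: "finite F" "F \<subseteq> emb ` S"
    and w: "w \<in> emb_points S" "\<And>f. f \<in> lattice \<inter> cball 0 (\<Sum>p\<in>F. norm p) \<Longrightarrow> f + w \<in> emb_points S"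
    and "y \<in> lattice" "y - w \<in> convex_cone hull F"
  shows "y \<in> emb_points S"
proof -
  obtain m where m: "norm (y - w - (\<Sum>p\<in>F. real (m p) *\<^sub>R p)) \<le> (\<Sum>p\<in>F. norm p)"
    using convex_cone_hull_finite_floor[OF F(1) assms(7)] by blast
  define N where "N = (\<Sum>p\<in>F. real (m p) *\<^sub>R p)"
  have "N \<in> emb_points S"
    unfolding N_def using F
    by (intro sum_of_nat_scaleR_mem_additive zero_mem_emb_points emb_points_add[OF sg])
       (auto simp: emb_points_def)
  have "y - w - N \<in> lattice"
    using \<open>N \<in> emb_points S\<close> w(1) emb_points_subset_lattice \<open>y \<in> lattice\<close>
    by (intro lattice_diff) auto
  moreover have "y - w - N \<in> cball 0 (\<Sum>p\<in>F. norm p)"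
    using m by (simp add: N_def)
  ultimately have "(y - w - N) + w \<in> emb_points S"
    using w(2) by blast
  then show ?thesis
    using emb_points_add[OF sg _ \<open>N \<in> emb_points S\<close>] by fastforce
qed

lemma deep_lattice_point_in_semigroup:
  fixes S :: "(nat \<times> (int ^'n)) set" and e R :: real
  assumes sg: "is_semigroup S" and "graded S" "ample S" and "e > 0"
  obtains k0 where "\<And>k x. k0 \<le> k \<Longrightarrow> ball (emb (k, x)) (e * real k) \<subseteq> Con S
    \<Longrightarrow> norm (emb (k, x)) \<le> R * real k \<Longrightarrow> (k, x) \<in> S"
proof -
  obtain F where F: "finite F" "F \<subseteq> emb ` S" and covers:
    "\<And>v. cball v (e / 2) \<subseteq> Con S \<Longrightarrow> norm v \<le> \<bar>R\<bar> + e \<Longrightarrow> v \<in> convex_cone hull F"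
    using finite_cone_covers_deep_part_of_Con[OF half_gt_zero[OF assms(4)], of S "\<bar>R\<bar> + e"] by blast
  obtain w where w: "w \<in> emb_points S"
    "\<And>f. f \<in> lattice \<inter> cball 0 (\<Sum>p\<in>F. norm p) \<Longrightarrow> f + w \<in> emb_points S"
    using set_differences_common_shift[OF zero_mem_emb_points emb_points_add[OF sg] finite_lattice_cball]
      lattice_subset_set_differences[OF assms(1-3)] by blast
  define k0 where "k0 = nat \<lceil>2 * norm w / e\<rceil> + 1"
  have "(k, x) \<in> S" if "k0 \<le> k" and ball: "ball (emb (k, x)) (e * real k) \<subseteq> Con S"
    and norm_le: "norm (emb (k, x)) \<le> R * real k" for k x
  proof -
    define y where "y = emb (k, x)"
    have "2 * norm w / e < k" "k > 0"
      using \<open>k0 \<le> k\<close> unfolding k0_def by linarith+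
    then have w_small: "norm w < e / 2 * k"
      using assms(4) by (simp add: field_simps)
    have "R * k \<le> \<bar>R\<bar> * k" "e / 2 * k \<le> e * k"
      using \<open>k > 0\<close> assms(4) by (simp_all add: mult_right_mono)
    then have "norm (y - w) \<le> (\<bar>R\<bar> + e) * k"
      using norm_triangle_ineq4[of y w] norm_le w_small by (simp add: y_def distrib_right)
    then have "norm ((1 / k) *\<^sub>R (y - w)) \<le> \<bar>R\<bar> + e"
      using \<open>k > 0\<close> by (simp del: scaleR_diff_right add: divide_le_eq)
    then have "(1 / k) *\<^sub>R (y - w) \<in> convex_cone hull F"
      using covers cone_cball_shrink_subset[OF cone_Con ball w_small] \<open>k > 0\<close> by (simp add: y_def)
    then have "real k *\<^sub>R ((1 / k) *\<^sub>R (y - w)) \<in> convex_cone hull F"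
      by (rule convex_cone_hull_mul) simp
    then have "y - w \<in> convex_cone hull F"
      using \<open>k > 0\<close> by simp
    then have "y \<in> emb_points S"
      using lattice_point_mem_emb_points[OF sg F w emb_in_lattice] unfolding y_def by blast
    moreover have "y \<noteq> 0"
      using \<open>k > 0\<close> by (simp add: y_def emb_def prod_eq_iff)
    ultimately show ?thesis
      using injD[OF inj_emb] by (auto simp: y_def emb_points_def)
  qed
  then show ?thesis
    using that by blast
qed

section \<open>Boundedness of the Newton set and decay of the distance function\<close>

lemma int_box_subset_slice:
  fixes S :: "(nat \<times> (int ^'n)) set" and e R :: real
  assumes "is_semigroup S" "graded S" "ample S" "e > 0"
  obtains k0 where "\<And>k m. k0 \<le> k \<Longrightarrow> 0 < k \<Longrightarrow> ball (1, m) e \<subseteq> Con S \<Longrightarrow> norm m \<le> R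
    \<Longrightarrow> int_box (real k *\<^sub>R m) (e * real k / (2 * CARD('n))) \<subseteq> slice S k"
proof -
  obtain k0 where k0: "\<And>k x. k0 \<le> k \<Longrightarrow> ball (emb (k, x)) (e / 2 * real k) \<subseteq> Con S
    \<Longrightarrow> norm (emb (k, x)) \<le> (1 + R + e) * real k \<Longrightarrow> (k, x) \<in> S"
    using deep_lattice_point_in_semigroup[OF assms(1-3) half_gt_zero[OF assms(4)]] by blast
  have "x \<in> slice S k"
    if "k0 \<le> k" "0 < k" and ball: "ball (1, m) e \<subseteq> Con S" and "norm m \<le> R"
      and x: "x \<in> int_box (real k *\<^sub>R m) (e * real k / (2 * CARD('n)))" for k m x
  proof -
    let ?c = "real k *\<^sub>R (1::real, m)"
    have "emb (k, x) - ?c = (0, of_int_vec x - real k *\<^sub>R m)"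
      by (simp add: emb_Pair)
    moreover have "norm (of_int_vec x - real k *\<^sub>R m) \<le> e / 2 * real k"
      using norm_of_int_vec_diff_le[OF x] by simp
    ultimately have dist_c: "dist ?c (emb (k, x)) \<le> e / 2 * real k"
      by (simp add: dist_norm norm_minus_commute)
    have "ball (emb (k, x)) (e / 2 * real k) \<subseteq> ball ?c (real k * e)"
    proof
      fix q assume "q \<in> ball (emb (k, x)) (e / 2 * real k)"
      then have "dist ?c q < e / 2 * real k + e / 2 * real k"
        using dist_c dist_triangle[of ?c q "emb (k, x)"] by simp
      also have "\<dots> = real k * e"
        by (simp add: field_simps)
      finally show "q \<in> ball ?c (real k * e)"
        by simp
    qed
    also have "\<dots> \<subseteq> Con S"
      using cone_scaleR_ball_subset[OF cone_Con ball] \<open>0 < k\<close> by simp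
    finally have "ball (emb (k, x)) (e / 2 * real k) \<subseteq> Con S" .
    moreover have "norm (emb (k, x)) \<le> (1 + R + e) * real k"
    proof -
      have "norm (1::real, m) \<le> 1 + R"
        using norm_Pair_le[of "1::real" m] \<open>norm m \<le> R\<close> by simp
      then have norm_scaled_pair: "norm ?c \<le> real k * (1 + R)"
        by (simp add: mult_left_mono del: scaleR_Pair)
      have "norm (emb (k, x)) \<le> norm ?c + dist ?c (emb (k, x))"
        using norm_triangle_sub[of "emb (k, x)" ?c] by (simp add: dist_norm norm_minus_commute)
      also have "\<dots> \<le> real k * (1 + R) + e / 2 * real k"
        using dist_c norm_scaled_pair by linarith
      also have "\<dots> \<le> (1 + R + e) * real k"
        using assms(4) by (simp add: algebra_simps)
      finally show ?thesis .
    qed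
    ultimately show ?thesis
      using k0 \<open>k0 \<le> k\<close> by (simp add: slice_def)
  qed
  then show ?thesis
    using that by blast
qed

lemma card_slice_ge_separated_Newton_points:
  fixes S :: "(nat \<times> (int ^'n)) set" and e :: real
  assumes "is_semigroup S" "graded S" "ample S" "e > 0"
    and ball: "ball (1, c) (2 * e) \<subseteq> Con S"
    and Y: "finite Y" "Y \<subseteq> Newton_set S"
    and separated: "\<And>y y'. y \<in> Y \<Longrightarrow> y' \<in> Y \<Longrightarrow> y \<noteq> y' \<Longrightarrow> 2 * e < norm (y - y')"
  obtains k where "0 < k"
    "real (card Y) * (e * real k / (2 * CARD('n))) ^ CARD('n) \<le> real (card (slice S k))"
proof -
  define mid where "mid y = (1/2) *\<^sub>R (c + y)" for y
  have mid_ball: "ball (1, mid y) e \<subseteq> Con S" if "y \<in> Y" for y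
  proof -
    have "(1, y) \<in> Con S"
      using Y that by (auto simp: Newton_set_def)
    from convex_midpoint_ball_subset[OF convex_Con this ball]
    show ?thesis
      by (simp add: mid_def)
  qed
  obtain k0 where k0: "\<And>k m. k0 \<le> k \<Longrightarrow> 0 < k \<Longrightarrow> ball (1, m) e \<subseteq> Con S
      \<Longrightarrow> norm m \<le> (\<Sum>y\<in>Y. norm (mid y))
      \<Longrightarrow> int_box (real k *\<^sub>R m) (e * real k / (2 * CARD('n))) \<subseteq> slice S k"
    using int_box_subset_slice[OF assms(1-4)] by blast
  define k where "k = max k0 1 + nat \<lceil>2 * CARD('n) / e\<rceil>"
  define h where "h = e * real k / (2 * CARD('n))"
  define B where "B y = int_box (real k *\<^sub>R mid y) h" for y
  have "0 < k"
    by (simp add: k_def less_max_iff_disj)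
  have "2 * real CARD('n) / e \<le> real k"
    using real_nat_ceiling_ge[of "2 * real CARD('n) / e"] by (simp add: k_def)
  then have "1 \<le> h"
    using assms(4) by (simp add: h_def pos_divide_le_eq le_divide_eq mult.commute)
  have "k0 \<le> k"
    by (simp add: k_def)
  have B_slice: "B y \<subseteq> slice S k" if "y \<in> Y" for y
    unfolding B_def h_def
    using k0[OF \<open>k0 \<le> k\<close> \<open>0 < k\<close> mid_ball[OF that]] member_le_sum[OF that _ Y(1), of "\<lambda>y. norm (mid y)"]
    by simp
  have B_disjoint: "B y \<inter> B y' = {}" if "y \<in> Y" "y' \<in> Y" "y \<noteq> y'" for y y'
  proof -
    have "real k *\<^sub>R mid y - real k *\<^sub>R mid y' = (real k / 2) *\<^sub>R (y - y')"
      by (simp add: mid_def algebra_simps)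
    then have distance: "norm (real k *\<^sub>R mid y - real k *\<^sub>R mid y') = real k / 2 * norm (y - y')"
      by simp
    have "2 * real CARD('n) * h = real k / 2 * (2 * e)"
      by (simp add: h_def)
    also have "\<dots> < real k / 2 * norm (y - y')"
      using separated[OF that] \<open>0 < k\<close> by simp
    finally have "2 * real CARD('n) * h < norm (real k *\<^sub>R mid y - real k *\<^sub>R mid y')"
      unfolding distance .
    then show ?thesis
      unfolding B_def by (rule int_box_disjoint)
  qed
  have "h ^ CARD('n) \<le> real (card (B y))" for y
    unfolding B_def by (rule card_int_box_ge[OF \<open>1 \<le> h\<close>])
  then have "real (card Y) * h ^ CARD('n) \<le> (\<Sum>y\<in>Y. real (card (B y)))"
    using sum_mono[of Y "\<lambda>_. h ^ CARD('n)" "\<lambda>y. real (card (B y))"] by simp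
  also have "\<dots> = real (card (\<Union>y\<in>Y. B y))"
    using card_UN_disjoint[OF Y(1), of B] B_disjoint by (simp add: B_def finite_int_box)
  also have "\<dots> \<le> real (card (slice S k))"
    using B_slice assms(2) \<open>0 < k\<close> unfolding graded_def by (intro of_nat_mono card_mono) auto
  finally show ?thesis
    using that \<open>0 < k\<close> by (simp add: h_def)
qed

lemma bounded_Newton_set:
  fixes S :: "(nat \<times> (int ^'n)) set"
  assumes "is_semigroup S" "graded S" "ample S" "restricted_growth S"
  shows "bounded (Newton_set S)"
proof (rule ccontr)
  assume unbounded: "\<not> bounded (Newton_set S)"
  obtain c r where "r > 0" and "ball (1, c) r \<subseteq> Con S"
    using Con_ball_at_level_one[OF assms(1-3)] by blast
  define e where "e = r / 2"
  have "e > 0" and ball: "ball (1, c) (2 * e) \<subseteq> Con S"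
    using \<open>r > 0\<close> \<open>ball (1, c) r \<subseteq> Con S\<close> by (simp_all add: e_def)
  obtain C where C: "\<And>k. k > 0 \<Longrightarrow> real (card (slice S k)) \<le> C * real k ^ CARD('n)"
    using assms(4) unfolding restricted_growth_def by blast
  define a where "a = (e / (2 * CARD('n))) ^ CARD('n)"
  have "a > 0"
    using \<open>e > 0\<close> by (simp add: a_def)
  obtain Y where Y: "finite Y" "Y \<subseteq> Newton_set S" "card Y = nat \<lceil>C / a\<rceil> + 1"
    and separated: "\<And>y y'. y \<in> Y \<Longrightarrow> y' \<in> Y \<Longrightarrow> y \<noteq> y' \<Longrightarrow> 2 * e < norm (y - y')"
    using unbounded_separated_subset[OF unbounded, of "2 * e"] \<open>e > 0\<close> by auto
  obtain k where "0 < k"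
    and "real (card Y) * (e * real k / (2 * CARD('n))) ^ CARD('n) \<le> real (card (slice S k))"
    using card_slice_ge_separated_Newton_points[OF assms(1-3) \<open>e > 0\<close> ball Y(1,2) separated]
    by blast
  moreover have "e * real k / (2 * CARD('n)) = e / (2 * CARD('n)) * real k"
    by simp
  then have "(e * real k / (2 * CARD('n))) ^ CARD('n) = a * real k ^ CARD('n)"
    by (simp only: a_def power_mult_distrib)
  ultimately have "real (card Y) * (a * real k ^ CARD('n)) \<le> real (card (slice S k))"
    by simp
  then have "(real (card Y) * a) * real k ^ CARD('n) \<le> C * real k ^ CARD('n)"
    using order_trans[OF _ C[OF \<open>0 < k\<close>]] by (simp only: mult.assoc)
  then have "real (card Y) * a \<le> C"
    by (rule mult_right_le_imp_le) (simp add: \<open>0 < k\<close>)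
  moreover have "C / a < real (card Y)"
    using Y(3) by linarith
  ultimately show False
    using \<open>a > 0\<close> by (simp add: pos_divide_less_eq)
qed

lemma dfun_bounds:
  assumes "0 \<le> b"
    and "\<And>x. x \<in> M_S S k - slice S k \<Longrightarrow> infdist (emb (k, x)) (frontier (Con S)) \<le> b"
  shows "0 \<le> dfun S k \<and> dfun S k \<le> b"
proof (cases "M_S S k - slice S k = {}")
  case False
  then obtain x0 where "x0 \<in> M_S S k - slice S k"
    by blast
  moreover have "bdd_above ((\<lambda>x. infdist (emb (k, x)) (frontier (Con S))) ` (M_S S k - slice S k))"
    using assms(2) by (intro bdd_aboveI2) auto
  ultimately show ?thesis
    using False assms(2) unfolding dfun_def Let_def
    by (auto intro: cSUP_upper2 cSUP_least simp: infdist_nonneg)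
qed (use assms(1) in \<open>simp add: dfun_def\<close>)

lemma dfun_over_level_tendsto_zero:
  fixes S :: "(nat \<times> (int ^'n)) set"
  assumes "is_semigroup S" "graded S" "ample S" "bounded (Newton_set S)"
  shows "(\<lambda>k. dfun S k / real k) \<longlonglongrightarrow> 0"
proof (rule LIMSEQ_I)
  obtain c where "c \<in> slice S 1"
    using assms(2) unfolding graded_def by auto
  then have "emb (1, c) \<in> Con S"
    using emb_points_subset_Con by (auto simp: emb_points_def slice_def)
  moreover have "fst (emb (1, c)) = 1" "bounded {x. (1, x) \<in> Con S}"
    using assms(4) by (simp_all add: emb_def Newton_set_def)
  ultimately obtain R where R: "\<And>u. u \<in> Con S \<Longrightarrow> norm u \<le> R * fst u"
    using cone_norm_le_fst[OF convex_Con[of S] cone_Con[of S] _ _ Con_fst_nonneg[of _ S]] by blast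
  fix r :: real assume "0 < r"
  obtain k0 where k0: "\<And>k x. k0 \<le> k \<Longrightarrow> ball (emb (k, x)) (r / 2 * real k) \<subseteq> Con S
      \<Longrightarrow> norm (emb (k, x)) \<le> R * real k \<Longrightarrow> (k, x) \<in> S"
    using deep_lattice_point_in_semigroup[OF assms(1-3) half_gt_zero[OF \<open>0 < r\<close>]] by blast
  have "norm (dfun S k / real k - 0) < r" if "Suc k0 \<le> k" for k
  proof -
    have "infdist (emb (k, x)) (frontier (Con S)) \<le> r / 2 * real k"
      if x: "x \<in> M_S S k - slice S k" for x
    proof (rule ccontr)
      assume "\<not> ?thesis"
      moreover have "emb (k, x) \<in> Con S"
        using x by (simp add: M_S_def)
      ultimately have "ball (emb (k, x)) (r / 2 * real k) \<subseteq> Con S"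
        by (intro ball_subset_if_le_infdist_frontier) auto
      moreover have "norm (emb (k, x)) \<le> R * real k"
        using R[OF \<open>emb (k, x) \<in> Con S\<close>] by (simp add: emb_def)
      ultimately show False
        using k0 \<open>Suc k0 \<le> k\<close> x by (auto simp: slice_def)
    qed
    then have "0 \<le> dfun S k" "dfun S k \<le> r / 2 * real k"
      using dfun_bounds[of "r / 2 * real k"] \<open>0 < r\<close> by auto
    moreover have "0 < r * real k"
      using \<open>Suc k0 \<le> k\<close> \<open>0 < r\<close> by simp
    ultimately show ?thesis
      using \<open>Suc k0 \<le> k\<close> by (simp add: divide_simps)
  qed
  then show "\<exists>no. \<forall>k\<ge>no. norm (dfun S k / real k - 0) < r"
    by blast
qed

theorem mainTheorem6:
  fixes S :: "(nat \<times> (int ^ 'n)) set"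
  assumes "is_semigroup S" and "graded S" and "ample S" and "restricted_growth S"
  shows "bounded (Newton_set S) \<and> ((\<lambda>k. dfun S k / real k) \<longlonglongrightarrow> 0)"
  using bounded_Newton_set[OF assms] dfun_over_level_tendsto_zero[OF assms(1-3)] by blast

end
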